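(* Let $\mathbb{K}$ be a distribution of $y\in(0,\infty)$, let $0<\epsilon\le 0.01$, and suppose $\theta^*\in\mathbb{R}^+$ attains $\min_{\theta\in\mathbb{R}^+}\mathrm{CR}(\theta,\mathbb{K})$; write $f^*_{\mathbb{K}}=\mathrm{CR}(\theta^*,\mathbb{K})$. Let $f^\epsilon_{\mathbb{K}}=\inf_{\theta\in[\epsilon,1/\epsilon]}\mathrm{CR}(\theta,\mathbb{K})$. Then $$f^\epsilon_{\mathbb{K}}\le(1+\epsilon)f^*_{\mathbb{K}}.$$
   Context: For threshold $\theta\ge0$ and season length $y>0$: $g(\theta,y)=\frac{1+\theta}{\min\{1,y\}}$ if $y\ge\theta$ and $g(\theta,y)=\frac{y}{\min\{1,y\}}$ otherwise (the competitive ratio of the ski-rental strategy that rents, at cost $1$ per unit time, until time $\theta$ and then buys at cost $1$). $\mathrm{CR}(\theta,\mathbb{K})=\mathbb{E}_{y\sim\mathbb{K}}[g(\theta,y)]$. *)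

theory Defs
  imports "HOL-Probability.Probability"
begin

text \<open>Competitive ratio of the ski-rental strategy with threshold theta on season length y.\<close>
definition g :: "real \<Rightarrow> real \<Rightarrow> real" where
  "g \<theta> y = (if y \<ge> \<theta> then (1 + \<theta>) / min 1 y else y / min 1 y)"

definition CR :: "real \<Rightarrow> real measure \<Rightarrow> ennreal" where
  "CR \<theta> K = (\<integral>\<^sup>+ y. ennreal (g \<theta> y) \<partial>K)"

end

theory Submission
  imports Defs
begin

text \<open>Clamping any threshold into \<open>[\<epsilon>, 1/\<epsilon>]\<close> costs at most a factor \<open>1 + \<epsilon>\<close> pointwise in the
  season length: raising a threshold \<open>s < \<epsilon>\<close> to \<open>\<epsilon>\<close> only adds \<open>\<epsilon>\<close> to the buying cost, and
  lowering a threshold \<open>s > 1/\<epsilon>\<close> to \<open>1/\<epsilon>\<close> replaces a rental cost of at least \<open>1/\<epsilon>\<close> by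
  \<open>1 + 1/\<epsilon>\<close>. Integrating gives the bound for every \<open>\<theta>\<^sup>*\<close>.\<close>

lemma borel_measurable_g: "(\<lambda>y. ennreal (g \<theta> y)) \<in> borel_measurable borel"
  unfolding g_def by measurable

lemma g_nonneg: "\<theta> \<ge> 0 \<Longrightarrow> g \<theta> y \<ge> 0"
  unfolding g_def by (auto simp: min_def)

lemma g_below_threshold: "y < \<theta> \<Longrightarrow> g \<theta> y = y / min 1 y"
  unfolding g_def by simp

lemma g_above_threshold: "\<theta> \<le> y \<Longrightarrow> g \<theta> y = (1 + \<theta>) / min 1 y"
  unfolding g_def by simp

lemma le_one_plus_mult: "0 \<le> (c::real) \<Longrightarrow> 0 \<le> a \<Longrightarrow> a \<le> (1 + c) * a"
  using mult_nonneg_nonneg[of c a] by (simp add: distrib_right)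

lemma g_raise_threshold:
  assumes "0 \<le> s" "s \<le> t" "t \<le> 1"
  shows "g t y \<le> (1 + t) * g s y"
proof (cases "y < s")
  case True
  then have "g t y = g s y"
    using assms by (simp add: g_below_threshold)
  then show ?thesis
    using g_nonneg[OF assms(1)] assms by (simp add: le_one_plus_mult)
next
  case s_le_y: False
  show ?thesis
  proof (cases "y < t")
    case True
    with s_le_y assms have "g t y \<le> g s y"
      by (cases "y = 0") (auto simp: g_below_threshold g_above_threshold min_def field_simps)
    also have "\<dots> \<le> (1 + t) * g s y"
      using g_nonneg[OF assms(1)] assms by (simp add: le_one_plus_mult)
    finally show ?thesis .
  next
    case False
    have g_s: "g s y = (1 + s) / min 1 y"
      using s_le_y by (simp add: g_above_threshold)
    from False have "g t y = (1 + t) * (1 / min 1 y)"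
      by (simp add: g_above_threshold)
    also have "(1 + t) * (1 / min 1 y) \<le> (1 + t) * ((1 + s) / min 1 y)"
      using False assms by (intro mult_left_mono divide_right_mono) auto
    finally show ?thesis
      unfolding g_s .
  qed
qed

lemma g_lower_threshold:
  assumes "1 \<le> t" "t \<le> s"
  shows "g t y \<le> (1 + 1 / t) * g s y"
proof (cases "y < t")
  case True
  then have "g t y = g s y"
    using assms by (simp add: g_below_threshold)
  then show ?thesis
    using g_nonneg[of s y] assms by (simp add: le_one_plus_mult)
next
  case t_le_y: False
  then have g_t: "g t y = 1 + t"
    using assms by (simp add: g_above_threshold min_def)
  have factor: "(1 + 1 / t) * t = 1 + t"
    using assms by (simp add: field_simps)
  show ?thesis
  proof (cases "y < s")
    case True
    then have "g s y = y"
      using t_le_y assms by (simp add: g_below_threshold min_def)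
    moreover have "(1 + 1 / t) * t \<le> (1 + 1 / t) * y"
      using t_le_y assms by (intro mult_left_mono) auto
    ultimately show ?thesis
      using g_t factor by simp
  next
    case False
    then have g_s: "g s y = 1 + s"
      using t_le_y assms by (simp add: g_above_threshold min_def)
    have "1 + t \<le> 1 + s"
      using assms by simp
    also have "\<dots> \<le> (1 + 1 / t) * (1 + s)"
      using assms by (simp add: le_one_plus_mult)
    finally show ?thesis
      unfolding g_t g_s .
  qed
qed

lemma CR_le_mult:
  assumes "sets K = sets borel" "0 \<le> c" "\<And>y. g t y \<le> c * g s y"
  shows "CR t K \<le> ennreal c * CR s K"
proof -
  have "CR t K \<le> (\<integral>\<^sup>+ y. ennreal c * ennreal (g s y) \<partial>K)"
    unfolding CR_def
    using assms(2,3) by (intro nn_integral_mono) (simp add: ennreal_mult'[symmetric] ennreal_leI)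
  also have "\<dots> = ennreal c * CR s K"
    unfolding CR_def
    using borel_measurable_g measurable_cong_sets[OF assms(1) refl]
    by (intro nn_integral_cmult) blast
  finally show ?thesis .
qed

lemma CR_clamp_threshold:
  assumes "sets K = sets borel" "0 < \<epsilon>" "\<epsilon> \<le> 1" "0 \<le> s"
  shows "CR (max \<epsilon> (min (1 / \<epsilon>) s)) K \<le> ennreal (1 + \<epsilon>) * CR s K"
proof -
  have "1 \<le> 1 / \<epsilon>"
    using assms by simp
  then have "\<epsilon> \<le> 1 / \<epsilon>"
    using assms(3) by linarith
  consider "s < \<epsilon>" | "\<epsilon> \<le> s" "s \<le> 1 / \<epsilon>" | "1 / \<epsilon> < s"
    by linarith
  then show ?thesis
  proof cases
    case 1
    then have "max \<epsilon> (min (1 / \<epsilon>) s) = \<epsilon>"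
      using \<open>1 \<le> 1 / \<epsilon>\<close> assms by simp
    then show ?thesis
      using CR_le_mult[OF assms(1) _ g_raise_threshold] 1 assms by simp
  next
    case 2
    have "1 * CR s K \<le> ennreal (1 + \<epsilon>) * CR s K"
      using assms by (intro mult_right_mono) auto
    then show ?thesis
      using 2 by simp
  next
    case 3
    then have "max \<epsilon> (min (1 / \<epsilon>) s) = 1 / \<epsilon>"
      using \<open>\<epsilon> \<le> 1 / \<epsilon>\<close> by simp
    moreover have "\<And>y. g (1 / \<epsilon>) y \<le> (1 + \<epsilon>) * g s y"
      using g_lower_threshold[of "1 / \<epsilon>" s] \<open>1 \<le> 1 / \<epsilon>\<close> 3 by simp
    ultimately show ?thesis
      using CR_le_mult[of K "1 + \<epsilon>" "1 / \<epsilon>" s] assms by simp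
  qed
qed

theorem mainTheorem4:
  fixes K :: "real measure" and \<epsilon> \<theta>star :: real
  assumes "prob_space K"
    and "sets K = sets borel"
    and "AE y in K. y > 0"
    and "0 < \<epsilon>" and "\<epsilon> \<le> 0.01"
    and "\<theta>star \<ge> 0"
    and "\<forall>\<theta>\<ge>0. CR \<theta>star K \<le> CR \<theta> K"
  shows "(INF \<theta>\<in>{\<epsilon>..1/\<epsilon>}. CR \<theta> K) \<le> (1 + ennreal \<epsilon>) * CR \<theta>star K"
proof -
  let ?\<theta> = "max \<epsilon> (min (1 / \<epsilon>) \<theta>star)"
  have "\<epsilon> \<le> 1" "1 \<le> 1 / \<epsilon>"
    using assms(4,5) by simp_all
  then have "?\<theta> \<in> {\<epsilon>..1/\<epsilon>}"
    by auto
  moreover have "CR ?\<theta> K \<le> (1 + ennreal \<epsilon>) * CR \<theta>star K"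
    using CR_clamp_threshold[of K \<epsilon> \<theta>star] assms(2,4,5,6) by (simp add: ennreal_plus)
  ultimately show ?thesis
    by (rule INF_lower2)
qed

end
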